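(* Let $\mathcal{C}$ be a polyhedral complex in $\mathbb{R}^n$, let $F:|\mathcal{C}|\to\mathbb{R}$ be affine-linear on each cell of $\mathcal{C}$, and let $[a,b]$ be an interval of transversal thresholds for $F$ on $\mathcal{C}$. Then for every $c\in[a,b]$, the set $\{x\in|\mathcal{C}|:F(x)\le c\}$ is homotopy equivalent to $\{x\in|\mathcal{C}|:F(x)\le a\}$, and $\{x\in|\mathcal{C}|:F(x)\ge c\}$ is homotopy equivalent to $\{x\in|\mathcal{C}|:F(x)\ge b\}$.
   Context: A polyhedral set in $\mathbb{R}^n$ is an intersection of finitely many closed affine half-spaces. A face of a polyhedral set $P$ is $\emptyset$, $P$, or $P\cap H$ for a hyperplane $H$ meeting $P$ with $P$ contained in one closed half-space of $H$. A polyhedral complex is a finite set $\mathcal{C}$ of polyhedral sets (cells) such that every face of a cell is a cell and any two cells intersect in a common face; $|\mathcal{C}|$ is the union of its cells. For $F:|\mathcal{C}|\to\mathbb{R}$ affine-linear on each cell, a cell $C$ is flat if $F$ is constant on $C$ (all $0$-cells are flat). A closed interval $[a,b]$ is an interval of transversal thresholds for $F$ on $\mathcal{C}$ if no flat cell $C$ of $\mathcal{C}$ has $F(C)\subseteq[a,b]$. *)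

theory Defs
  imports "HOL-Analysis.Analysis"
begin

definition poly_face :: "'a::euclidean_space set \<Rightarrow> 'a set \<Rightarrow> bool" where
  "poly_face T P \<longleftrightarrow> T = {} \<or> T = P \<or>
     (\<exists>a b. a \<noteq> 0 \<and> P \<inter> {x. a \<bullet> x = b} \<noteq> {} \<and>
        (P \<subseteq> {x. a \<bullet> x \<le> b} \<or> P \<subseteq> {x. a \<bullet> x \<ge> b}) \<and>
        T = P \<inter> {x. a \<bullet> x = b})"

definition polyhedral_complex :: "'a::euclidean_space set set \<Rightarrow> bool" where
  "polyhedral_complex \<C> \<longleftrightarrow> finite \<C> \<and> (\<forall>C\<in>\<C>. polyhedron C) \<and>
     (\<forall>C\<in>\<C>. \<forall>T. poly_face T C \<longrightarrow> T \<in> \<C>) \<and>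
     (\<forall>C1\<in>\<C>. \<forall>C2\<in>\<C>. poly_face (C1 \<inter> C2) C1 \<and> poly_face (C1 \<inter> C2) C2)"

definition cellwise_affine :: "'a::euclidean_space set set \<Rightarrow> ('a \<Rightarrow> real) \<Rightarrow> bool" where
  "cellwise_affine \<C> F \<longleftrightarrow> (\<forall>C\<in>\<C>. \<exists>u d. \<forall>x\<in>C. F x = u \<bullet> x + d)"

definition flat_cell :: "('a \<Rightarrow> real) \<Rightarrow> 'a set \<Rightarrow> bool" where
  "flat_cell F C \<longleftrightarrow> C \<noteq> {} \<and> (\<exists>k. \<forall>x\<in>C. F x = k)"

definition transversal_thresholds ::
    "'a::euclidean_space set set \<Rightarrow> ('a \<Rightarrow> real) \<Rightarrow> real \<Rightarrow> real \<Rightarrow> bool" where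
  "transversal_thresholds \<C> F a b \<longleftrightarrow>
     (\<forall>C\<in>\<C>. flat_cell F C \<longrightarrow> \<not> (F ` C \<subseteq> {a..b}))"

end

theory Submission
  imports Defs
begin

text \<open>Let Y(K) be the a-sublevel set of F together with the c-sublevel parts of the cells in a
  face-closed subfamily K of the complex. Removing a maximal cell D from K does not change the
  homotopy type: if F \<le> c on D, transversality forces F \<le> a on D (a minimal subcell reaching
  above a would have a flat face with value in [a, c]); otherwise choose p in the relative
  interior of D with F p > c and push the c-sublevel part of D radially away from p onto the
  union of its a-sublevel part and its proper faces. This is a straight-line deformation
  retraction. Superlevel sets are sublevel sets of -F.\<close>

lemma poly_face_supporting_hyperplane:
  fixes P :: "'a::euclidean_space set"
  assumes "a \<noteq> 0" "z \<in> P" "a \<bullet> z = b" "\<And>x. x \<in> P \<Longrightarrow> a \<bullet> x \<le> b"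
  shows "poly_face (P \<inter> {x. a \<bullet> x = b}) P"
  unfolding poly_face_def using assms by blast

lemma poly_face_subset: "poly_face T P \<Longrightarrow> T \<subseteq> P"
  unfolding poly_face_def by blast

lemma poly_face_imp_face_of:
  fixes P :: "'a::euclidean_space set"
  assumes "convex P" "poly_face T P"
  shows "T face_of P"
  using assms(2) unfolding poly_face_def
  by (auto intro: face_of_Int_supporting_hyperplane_le face_of_Int_supporting_hyperplane_ge
      simp: assms(1) face_of_refl subset_iff)

definition poly_boundary :: "'a::euclidean_space set \<Rightarrow> 'a set" where
  "poly_boundary P = \<Union>{T. poly_face T P \<and> T \<noteq> P}"

lemma poly_boundary_disjoint_rel_interior:
  fixes P :: "'a::euclidean_space set"
  assumes "convex P"
  shows "poly_boundary P \<inter> rel_interior P = {}"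
  unfolding poly_boundary_def
  using face_of_disjoint_rel_interior poly_face_imp_face_of[OF assms] by blast

locale inequality_polyhedron =
  fixes D :: "'a::euclidean_space set" and H :: "'i set"
    and \<alpha> :: "'i \<Rightarrow> 'a" and \<beta> :: "'i \<Rightarrow> real"
  assumes finite_H: "finite H"
    and normal_nonzero: "\<And>h. h \<in> H \<Longrightarrow> \<alpha> h \<noteq> 0"
    and D_eq: "D = affine hull D \<inter> {x. \<forall>h\<in>H. \<alpha> h \<bullet> x \<le> \<beta> h}"
    and rel_interior_eq: "rel_interior D = {x \<in> D. \<forall>h\<in>H. \<alpha> h \<bullet> x < \<beta> h}"

lemma polyhedron_inequality_representation:
  fixes D :: "'a::euclidean_space set"
  assumes "polyhedron D"
  obtains H :: "'a set set" and \<alpha> \<beta> where "inequality_polyhedron D H \<alpha> \<beta>"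
proof -
  obtain F where fin: "finite F" and seq: "D = affine hull D \<inter> \<Inter>F"
    and faces: "\<forall>h\<in>F. \<exists>a b. a \<noteq> 0 \<and> h = {x. a \<bullet> x \<le> b}"
    and min: "\<And>F'. F' \<subset> F \<Longrightarrow> D \<subset> affine hull D \<inter> \<Inter>F'"
    using assms polyhedron_Int_affine_minimal by metis
  then obtain \<alpha> \<beta> where ab: "\<And>h. h \<in> F \<Longrightarrow> \<alpha> h \<noteq> 0 \<and> h = {x. \<alpha> h \<bullet> x \<le> \<beta> h}"
    by metis
  have "rel_interior D = {x \<in> D. \<forall>h\<in>F. \<alpha> h \<bullet> x < \<beta> h}"
    by (rule rel_interior_polyhedron_explicit[OF fin seq ab min])
  moreover have "D = affine hull D \<inter> {x. \<forall>h\<in>F. \<alpha> h \<bullet> x \<le> \<beta> h}"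
    using seq ab by blast
  ultimately show ?thesis
    using that[of F \<alpha> \<beta>] fin ab unfolding inequality_polyhedron_def by blast
qed

context inequality_polyhedron
begin

lemma mem_D_iff: "x \<in> D \<longleftrightarrow> x \<in> affine hull D \<and> (\<forall>h\<in>H. \<alpha> h \<bullet> x \<le> \<beta> h)"
  using D_eq by blast

lemma poly_face_hyperplane_section:
  assumes "h \<in> H" "z \<in> D" "\<alpha> h \<bullet> z = \<beta> h"
  shows "poly_face (D \<inter> {x. \<alpha> h \<bullet> x = \<beta> h}) D"
  using assms normal_nonzero mem_D_iff by (intro poly_face_supporting_hyperplane) auto

lemma convex_D: "convex D"
proof -
  have "{x. \<forall>h\<in>H. \<alpha> h \<bullet> x \<le> \<beta> h} = (\<Inter>h\<in>H. {x. \<alpha> h \<bullet> x \<le> \<beta> h})" by blast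
  then show ?thesis
    by (subst D_eq) (auto intro!: convex_Int convex_INT convex_halfspace_le)
qed

lemma affine_line_mem_hull:
  assumes "x \<in> D" "y \<in> D"
  shows "x + t *\<^sub>R (y - x) \<in> affine hull D"
proof -
  have "(1 - t) *\<^sub>R x + t *\<^sub>R y \<in> affine hull D"
    using assms by (intro mem_affine[OF affine_affine_hull]) (auto intro: hull_inc)
  then show ?thesis by (simp add: algebra_simps)
qed

lemma line_mem_D_iff:
  assumes "x \<in> D" "y \<in> D"
  shows "x + t *\<^sub>R (y - x) \<in> D \<longleftrightarrow> (\<forall>h\<in>H. \<alpha> h \<bullet> x + t * (\<alpha> h \<bullet> (y - x)) \<le> \<beta> h)"
  using affine_line_mem_hull[OF assms] mem_D_iff by (simp add: inner_add_right)

lemma ray_leaves_through_face: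
  assumes x: "x \<in> D" and y: "y \<in> D" and leaves: "\<not> (\<forall>t\<ge>0. x + t *\<^sub>R (y - x) \<in> D)"
  obtains t T where "1 \<le> t" "poly_face T D" "x \<notin> T" "x + t *\<^sub>R (y - x) \<in> T"
proof -
  \<comment> \<open>the ray crosses the hyperplane of a constraint h in K at parameter \<rho> h; take the first\<close>
  define K where "K = {h \<in> H. 0 < \<alpha> h \<bullet> (y - x)}"
  define \<rho> where "\<rho> h = (\<beta> h - \<alpha> h \<bullet> x) / (\<alpha> h \<bullet> (y - x))" for h
  have x_le: "\<alpha> h \<bullet> x \<le> \<beta> h" and y_le: "\<alpha> h \<bullet> y \<le> \<beta> h" if "h \<in> H" for h
    using x y that mem_D_iff by auto
  have "K \<noteq> {}"
  proof
    assume "K = {}"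
    then have "x + t *\<^sub>R (y - x) \<in> D" if "0 \<le> t" for t
      using line_mem_D_iff[OF x y] x_le that unfolding K_def
      by (smt (verit, best) empty_Collect_eq mult_nonneg_nonpos)
    with leaves show False by blast
  qed
  moreover have "finite K" using finite_H K_def by simp
  ultimately obtain h where hK: "h \<in> K" and h_min: "\<And>k. k \<in> K \<Longrightarrow> \<rho> h \<le> \<rho> k"
    using ex_min_if_finite[of "\<rho> ` K"] by (metis finite_imageI image_iff image_is_empty not_le)
  have hH: "h \<in> H" and h_pos: "0 < \<alpha> h \<bullet> (y - x)" using hK K_def by auto
  define z where "z = x + \<rho> h *\<^sub>R (y - x)"
  have one_le: "1 \<le> \<rho> h"
    using y_le[OF hH] h_pos unfolding \<rho>_def by (simp add: field_simps inner_diff_right)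
  have z_on: "\<alpha> h \<bullet> z = \<beta> h"
    unfolding z_def \<rho>_def using h_pos by (simp add: inner_add_right)
  have "\<alpha> k \<bullet> x + \<rho> h * (\<alpha> k \<bullet> (y - x)) \<le> \<beta> k" if "k \<in> H" for k
  proof (cases "k \<in> K")
    case True
    then have pos: "0 < \<alpha> k \<bullet> (y - x)" using K_def by auto
    have "\<rho> h * (\<alpha> k \<bullet> (y - x)) \<le> \<rho> k * (\<alpha> k \<bullet> (y - x))"
      using h_min[OF True] pos by (simp add: mult_right_mono)
    also have "\<dots> = \<beta> k - \<alpha> k \<bullet> x" unfolding \<rho>_def using pos by simp
    finally show ?thesis by simp
  next
    case False
    then have "\<rho> h * (\<alpha> k \<bullet> (y - x)) \<le> 0"
      using that one_le K_def by (auto intro: mult_nonneg_nonpos)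
    then show ?thesis using x_le[OF that] by simp
  qed
  then have zD: "z \<in> D" using line_mem_D_iff[OF x y] z_def by blast
  have "x \<notin> D \<inter> {w. \<alpha> h \<bullet> w = \<beta> h}"
    using y_le[OF hH] h_pos by (simp add: inner_diff_right)
  then show ?thesis
    using that one_le poly_face_hyperplane_section[OF hH zD z_on] zD z_on z_def by blast
qed

end

lemma continuous_on_Max_insert:
  fixes f :: "'i \<Rightarrow> 'b::topological_space \<Rightarrow> real"
  assumes "finite J" "continuous_on S g" "\<And>j. j \<in> J \<Longrightarrow> continuous_on S (f j)"
  shows "continuous_on S (\<lambda>x. Max (insert (g x) ((\<lambda>j. f j x) ` J)))"
  using assms
proof (induction J rule: finite_induct)
  case empty
  then show ?case by simp
next
  case (insert j J)
  have "Max (insert (g x) ((\<lambda>j. f j x) ` insert j J))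
      = max (f j x) (Max (insert (g x) ((\<lambda>j. f j x) ` J)))" for x
  proof -
    have "insert (g x) ((\<lambda>j. f j x) ` insert j J) = insert (f j x) (insert (g x) ((\<lambda>j. f j x) ` J))"
      by auto
    then show ?thesis using insert.hyps(1) by simp
  qed
  then show ?case
    using insert by (simp add: continuous_on_max)
qed

locale centred_polyhedron = inequality_polyhedron +
  fixes p :: "'a::euclidean_space"
  assumes centre: "p \<in> rel_interior D"
begin

lemma centre_in_D: "p \<in> D"
  using centre rel_interior_subset by blast

lemma slack_pos: "h \<in> H \<Longrightarrow> \<alpha> h \<bullet> p < \<beta> h"
  using centre rel_interior_eq by blast

text \<open>gauge is the Minkowski gauge of D centred at p: for x in D and t > 0,
  radial t x lies in D iff gauge x \<le> t.\<close>

definition facet_ratio where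
  "facet_ratio h x = \<alpha> h \<bullet> (x - p) / (\<beta> h - \<alpha> h \<bullet> p)"

definition gauge where
  "gauge x = Max (insert 0 ((\<lambda>h. facet_ratio h x) ` H))"

definition radial where
  "radial t x = p + (1 / t) *\<^sub>R (x - p)"

lemma inner_radial:
  "h \<in> H \<Longrightarrow> \<alpha> h \<bullet> radial t x = \<alpha> h \<bullet> p + facet_ratio h x * (\<beta> h - \<alpha> h \<bullet> p) / t"
  unfolding radial_def facet_ratio_def using slack_pos[of h] by (simp add: inner_add_right)

lemma facet_ratio_le_gauge: "h \<in> H \<Longrightarrow> facet_ratio h x \<le> gauge x"
  unfolding gauge_def using finite_H by simp

lemma gauge_cases: "gauge x = 0 \<or> (\<exists>h\<in>H. gauge x = facet_ratio h x)"
proof -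
  have "gauge x \<in> insert 0 ((\<lambda>h. facet_ratio h x) ` H)"
    unfolding gauge_def using finite_H by (intro Max_in) auto
  then show ?thesis by auto
qed

lemma continuous_on_gauge: "continuous_on S gauge"
  unfolding gauge_def[abs_def] facet_ratio_def
  using finite_H by (intro continuous_on_Max_insert continuous_intros) (fastforce dest: slack_pos)+

lemma facet_ratio_le_one: "x \<in> D \<Longrightarrow> h \<in> H \<Longrightarrow> facet_ratio h x \<le> 1"
  unfolding facet_ratio_def using slack_pos[of h] mem_D_iff
  by (auto simp: field_simps inner_diff_right)

lemma gauge_le_one: "x \<in> D \<Longrightarrow> gauge x \<le> 1"
  using gauge_cases[of x] facet_ratio_le_one by auto

lemma radial_in_D:
  assumes x: "x \<in> D" and "0 < t" "gauge x \<le> t"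
  shows "radial t x \<in> D"
proof -
  have "\<alpha> h \<bullet> radial t x \<le> \<beta> h" if h: "h \<in> H" for h
  proof -
    have "facet_ratio h x / t \<le> 1"
      using facet_ratio_le_gauge[OF h, of x] assms by simp
    then have "facet_ratio h x / t * (\<beta> h - \<alpha> h \<bullet> p) \<le> 1 * (\<beta> h - \<alpha> h \<bullet> p)"
      using slack_pos[OF h] by (intro mult_right_mono) auto
    then show ?thesis unfolding inner_radial[OF h] by simp
  qed
  moreover have "radial t x \<in> affine hull D"
    using affine_line_mem_hull[OF centre_in_D x, of "1 / t"] unfolding radial_def .
  ultimately show ?thesis using mem_D_iff by blast
qed

lemma radial_gauge_in_boundary:
  assumes x: "x \<in> D" and pos: "0 < gauge x"
  shows "radial (gauge x) x \<in> poly_boundary D"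
proof -
  obtain h where h: "h \<in> H" and gh: "gauge x = facet_ratio h x"
    using gauge_cases[of x] pos by auto
  have on: "\<alpha> h \<bullet> radial (gauge x) x = \<beta> h"
    unfolding inner_radial[OF h] gh using pos gh by simp
  have in_D: "radial (gauge x) x \<in> D" using radial_in_D[OF x pos] by simp
  have "p \<notin> D \<inter> {y. \<alpha> h \<bullet> y = \<beta> h}" using slack_pos[OF h] by simp
  then show ?thesis
    unfolding poly_boundary_def using poly_face_hyperplane_section[OF h in_D on] on in_D centre_in_D
    by blast
qed

lemma boundary_gauge_ge_one:
  assumes "x \<in> poly_boundary D"
  shows "1 \<le> gauge x"
proof -
  have "x \<in> D" using assms poly_face_subset unfolding poly_boundary_def by blast
  moreover have "x \<notin> rel_interior D"
    using assms poly_boundary_disjoint_rel_interior[OF convex_D] by blast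
  ultimately obtain h where h: "h \<in> H" and "\<alpha> h \<bullet> x = \<beta> h"
    using rel_interior_eq mem_D_iff by force
  then have "facet_ratio h x = 1"
    unfolding facet_ratio_def using slack_pos[OF h] by (simp add: inner_diff_right)
  then show ?thesis using facet_ratio_le_gauge[OF h, of x] by simp
qed

end

locale sublevel_cell = centred_polyhedron +
  fixes F :: "'a \<Rightarrow> real" and u :: 'a and d a c :: real
  assumes F_affine: "\<And>x. x \<in> D \<Longrightarrow> F x = u \<bullet> x + d"
    and a_le_c: "a \<le> c" and c_less_centre: "c < F p"
begin

text \<open>retract pushes a point of the c-sublevel set of D radially away from p until it reaches
  the level a or the relative boundary of D, whichever comes first; F decreases on the way
  because F p > c.\<close>

definition level_ratio where
  "level_ratio x = (F p - (u \<bullet> x + d)) / (F p - a)"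

definition scale where
  "scale x = min 1 (max (level_ratio x) (gauge x))"

definition retract where
  "retract x = radial (scale x) x"

lemma F_radial:
  assumes "x \<in> D" "radial t x \<in> D"
  shows "F (radial t x) = F p - (F p - F x) / t"
  using assms centre_in_D unfolding radial_def
  by (simp add: F_affine inner_add_right inner_diff_right algebra_simps diff_divide_distrib)

lemma level_ratio_pos: "x \<in> D \<Longrightarrow> F x \<le> c \<Longrightarrow> 0 < level_ratio x"
  unfolding level_ratio_def using a_le_c c_less_centre F_affine by simp

lemma one_le_level_ratio_iff: "x \<in> D \<Longrightarrow> 1 \<le> level_ratio x \<longleftrightarrow> F x \<le> a"
  unfolding level_ratio_def using a_le_c c_less_centre F_affine by (simp add: field_simps)

lemma scale_pos: "x \<in> D \<Longrightarrow> F x \<le> c \<Longrightarrow> 0 < scale x"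
  unfolding scale_def using level_ratio_pos by fastforce

lemma gauge_le_scale: "x \<in> D \<Longrightarrow> gauge x \<le> scale x"
  unfolding scale_def using gauge_le_one by simp

lemma retract_in_D: "x \<in> D \<Longrightarrow> F x \<le> c \<Longrightarrow> retract x \<in> D"
  unfolding retract_def using radial_in_D scale_pos gauge_le_scale by blast

lemma F_retract_le:
  assumes x: "x \<in> D" "F x \<le> c"
  shows "F (retract x) \<le> F x"
proof -
  have "0 < F p - F x" using x c_less_centre by simp
  moreover have "0 < scale x" "scale x \<le> 1" using scale_pos[OF x] scale_def by auto
  ultimately have "F p - F x \<le> (F p - F x) / scale x"
    by (simp add: le_divide_eq mult_left_le)
  then show ?thesis
    using F_radial[OF x(1) retract_in_D[OF x, unfolded retract_def]] unfolding retract_def by simp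
qed

lemma closed_segment_retract:
  assumes x: "x \<in> D" "F x \<le> c"
  shows "closed_segment x (retract x) \<subseteq> {y \<in> D. F y \<le> c}"
proof
  fix y assume "y \<in> closed_segment x (retract x)"
  then obtain t where t: "0 \<le> t" "t \<le> 1" "y = (1 - t) *\<^sub>R x + t *\<^sub>R retract x"
    unfolding closed_segment_def by auto
  have r: "retract x \<in> D" using retract_in_D[OF x] .
  have yD: "y \<in> D" using convexD[OF convex_D x(1) r, of "1 - t" t] t by simp
  have "F y = (1 - t) * F x + t * F (retract x)"
    using yD x(1) r unfolding t(3) by (simp add: F_affine inner_add_right algebra_simps)
  also have "\<dots> \<le> (1 - t) * F x + t * F x"
    using F_retract_le[OF x] t by (simp add: mult_left_mono)
  finally show "y \<in> {y \<in> D. F y \<le> c}" using yD x(2) by (simp add: algebra_simps)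
qed

lemma retract_fixed:
  assumes x: "x \<in> D" and "F x \<le> a \<or> x \<in> poly_boundary D"
  shows "retract x = x"
proof -
  have "1 \<le> max (level_ratio x) (gauge x)"
    using assms one_le_level_ratio_iff boundary_gauge_ge_one by force
  then show ?thesis unfolding retract_def scale_def radial_def by simp
qed

lemma retract_target:
  assumes x: "x \<in> D" "F x \<le> c"
  shows "F (retract x) \<le> a \<or> retract x \<in> poly_boundary D"
proof -
  have r: "retract x \<in> D" using retract_in_D[OF x] .
  consider "scale x = level_ratio x" | "scale x = gauge x" | "scale x = 1" "1 \<le> level_ratio x"
    unfolding scale_def using gauge_le_one[OF x(1)] by linarith
  then show ?thesis
  proof cases
    case 1
    moreover have "level_ratio x = (F p - F x) / (F p - a)" "0 < F p - F x" "0 < F p - a"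
      using x a_le_c c_less_centre unfolding level_ratio_def F_affine[OF x(1)] by auto
    ultimately have "(F p - F x) / scale x = F p - a" by simp
    then have "F (retract x) = a"
      using F_radial[OF x(1) r[unfolded retract_def]] unfolding retract_def by simp
    then show ?thesis by simp
  next
    case 2
    then show ?thesis
      using radial_gauge_in_boundary[OF x(1)] scale_pos[OF x] unfolding retract_def by simp
  next
    case 3
    then show ?thesis
      using retract_fixed[OF x(1)] one_le_level_ratio_iff[OF x(1)] by auto
  qed
qed

lemma continuous_on_retract: "continuous_on {x \<in> D. F x \<le> c} retract"
proof -
  have "continuous_on {x \<in> D. F x \<le> c} scale"
    unfolding scale_def[abs_def] level_ratio_def
    using a_le_c c_less_centre by (intro continuous_intros continuous_on_gauge) auto
  moreover have "\<forall>x\<in>{x \<in> D. F x \<le> c}. scale x \<noteq> 0" using scale_pos by force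
  ultimately show ?thesis
    unfolding retract_def[abs_def] radial_def by (intro continuous_intros) auto
qed

lemma retraction_onto_lower_part:
  "retraction {x \<in> D. F x \<le> c} {x \<in> D. F x \<le> c \<and> (F x \<le> a \<or> x \<in> poly_boundary D)} retract"
  unfolding retraction_def
  using continuous_on_retract retract_in_D F_retract_le retract_target retract_fixed by fastforce

end

lemma homotopy_eqv_glue_retraction:
  fixes A Y :: "'a::euclidean_space set"
  assumes "closed A" "closed Y" and ret: "retraction A (A \<inter> Y) r"
    and seg: "\<And>x. x \<in> A \<Longrightarrow> closed_segment x (r x) \<subseteq> A"
  shows "(A \<union> Y) homotopy_eqv Y"
proof -
  define r' where "r' x = (if x \<in> A then r x else x)" for x
  have cont: "continuous_on (A \<union> Y) r'"
    unfolding r'_def using ret unfolding retraction_def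
    by (intro continuous_on_cases assms(1,2)) auto
  have "retraction (A \<union> Y) Y r'"
    using ret cont unfolding retraction_def r'_def by auto
  moreover have "homotopic_with_canon (\<lambda>x. True) (A \<union> Y) (A \<union> Y) id r'"
    using cont seg unfolding r'_def by (intro homotopic_with_linear) auto
  ultimately show ?thesis
    using deformation_retract_imp_homotopy_eqv by blast
qed

lemma poly_face_level_set_of_max:
  fixes E :: "'a::euclidean_space set"
  assumes aff: "\<forall>y\<in>E. F y = u \<bullet> y + d" and x: "x \<in> E" and max: "\<forall>y\<in>E. F y \<le> F x"
  shows "poly_face {y \<in> E. F y = F x} E"
proof (cases "u = 0")
  case True
  then have "{y \<in> E. F y = F x} = E" using aff x by auto
  then show ?thesis unfolding poly_face_def by simp
next
  case False
  have "{y \<in> E. F y = F x} = E \<inter> {y. u \<bullet> y = F x - d}" using aff x by auto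
  moreover have "poly_face (E \<inter> {y. u \<bullet> y = F x - d}) E"
    using False x aff max by (intro poly_face_supporting_hyperplane) auto
  ultimately show ?thesis by simp
qed

lemma affine_increase_reaches_poly_face:
  fixes E :: "'a::euclidean_space set"
  assumes "polyhedron E" and aff: "\<forall>w\<in>E. F w = u \<bullet> w + d" and bounded: "\<forall>w\<in>E. F w \<le> c"
    and x: "x \<in> E" and y: "y \<in> E" and "F x < F y"
  obtains T z where "poly_face T E" "x \<notin> T" "z \<in> T" "F y \<le> F z"
proof -
  obtain H :: "'a set set" and \<alpha> \<beta> where "inequality_polyhedron E H \<alpha> \<beta>"
    using polyhedron_inequality_representation[OF \<open>polyhedron E\<close>] by blast
  then interpret inequality_polyhedron E H \<alpha> \<beta> .
  have F_ray: "F (x + t *\<^sub>R (y - x)) = F x + t * (F y - F x)" if "x + t *\<^sub>R (y - x) \<in> E" for t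
    using aff that x y by (simp add: inner_add_right inner_diff_right algebra_simps)
  define t where "t = (c - F x) / (F y - F x) + 1"
  have "0 \<le> t"
    using bounded x \<open>F x < F y\<close> unfolding t_def by simp
  moreover have "F x + t * (F y - F x) = c + (F y - F x)"
    using \<open>F x < F y\<close> unfolding t_def by (simp add: field_simps)
  ultimately have "0 \<le> t" "F x + t * (F y - F x) > c"
    using \<open>F x < F y\<close> by auto
  then have "\<not> (\<forall>t\<ge>0. x + t *\<^sub>R (y - x) \<in> E)"
    using F_ray[of t] bounded by force
  then obtain s T where "1 \<le> s" "poly_face T E" "x \<notin> T" "x + s *\<^sub>R (y - x) \<in> T"
    using ray_leaves_through_face[OF x y] by blast
  moreover have "1 * (F y - F x) \<le> s * (F y - F x)"
    using \<open>1 \<le> s\<close> \<open>F x < F y\<close> by (intro mult_right_mono) auto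
  then have "F y \<le> F x + s * (F y - F x)" by simp
  ultimately show ?thesis
    using that F_ray[of s] poly_face_subset by (metis subsetD)
qed

lemma transversal_cell_below_lower_threshold:
  fixes \<C> :: "'a::euclidean_space set set"
  assumes pc: "polyhedral_complex \<C>" and ca: "cellwise_affine \<C> F"
    and tt: "transversal_thresholds \<C> F a c" and D: "D \<in> \<C>" and below: "\<forall>x\<in>D. F x \<le> c"
  shows "\<forall>x\<in>D. F x \<le> a"
proof (rule ccontr)
  assume "\<not> (\<forall>x\<in>D. F x \<le> a)"
  define S where "S = {E \<in> \<C>. E \<subseteq> D \<and> (\<exists>x\<in>E. a < F x)}"
  have "finite S" using pc unfolding polyhedral_complex_def S_def by auto
  moreover have "S \<noteq> {}" using D \<open>\<not> (\<forall>x\<in>D. F x \<le> a)\<close> unfolding S_def by force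
  ultimately obtain E where E: "E \<in> S" and E_min: "\<And>T. T \<in> S \<Longrightarrow> T \<subseteq> E \<Longrightarrow> T = E"
    using finite_has_minimal by metis
  then obtain x where x: "x \<in> E" "a < F x" and E_cell: "E \<in> \<C>" "E \<subseteq> D"
    unfolding S_def by blast
  obtain u d where aff: "\<forall>y\<in>E. F y = u \<bullet> y + d"
    using ca E_cell unfolding cellwise_affine_def by blast
  have faces: "T \<in> \<C>" if "poly_face T E" for T
    using pc E_cell that unfolding polyhedral_complex_def by blast
  show False
  proof (cases "\<forall>y\<in>E. F y \<le> F x")
    case True
    \<comment> \<open>the maximal level set of F on E is a flat cell inside [a, c]\<close>
    define T where "T = {y \<in> E. F y = F x}"
    have "T \<in> \<C>" unfolding T_def by (rule faces[OF poly_face_level_set_of_max[OF aff x(1) True]])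
    moreover have "flat_cell F T" unfolding flat_cell_def T_def using x by auto
    moreover have "F ` T \<subseteq> {a..c}" unfolding T_def using x E_cell below by auto
    ultimately show False using tt unfolding transversal_thresholds_def by blast
  next
    case False
    then obtain y where "y \<in> E" "F x < F y" by force
    moreover have "polyhedron E" using pc E_cell unfolding polyhedral_complex_def by blast
    moreover have "\<forall>w\<in>E. F w \<le> c" using below E_cell by blast
    ultimately obtain T z where T: "poly_face T E" "x \<notin> T" "z \<in> T" "F y \<le> F z"
      using affine_increase_reaches_poly_face[OF _ aff _ x(1)] by blast
    have "T \<subseteq> D" using poly_face_subset[OF T(1)] E_cell by blast
    moreover have "a < F z" using T(4) x(2) \<open>F x < F y\<close> by linarith
    ultimately have "T \<in> S" using faces[OF T(1)] T(3) unfolding S_def by blast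
    then show False using E_min T poly_face_subset x(1) by blast
  qed
qed

lemma rel_interior_point_above:
  fixes D :: "'a::euclidean_space set"
  assumes "convex D" and aff: "\<And>x. x \<in> D \<Longrightarrow> F x = u \<bullet> x + d" and q: "q \<in> D" "c < F q"
  obtains p where "p \<in> rel_interior D" "c < F p"
proof -
  obtain p0 where p0: "p0 \<in> rel_interior D"
    using assms(1) q(1) rel_interior_eq_empty by blast
  have p0D: "p0 \<in> D" using p0 rel_interior_subset by blast
  show ?thesis
  proof (cases "c < F p0")
    case True
    then show ?thesis using that p0 by blast
  next
    case False
    \<comment> \<open>points strictly between q and a relative interior point are relative interior\<close>
    define e where "e = (F q - c) / (2 * (F q - F p0))"
    have e: "0 < e" "e \<le> 1" using False q unfolding e_def by (auto simp: field_simps)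
    have p: "q - e *\<^sub>R (q - p0) \<in> rel_interior D"
      using rel_interior_closure_convex_shrink[OF assms(1) p0] q(1) closure_subset e by blast
    then have "q - e *\<^sub>R (q - p0) \<in> D" using rel_interior_subset by blast
    then have "F (q - e *\<^sub>R (q - p0)) = F q - e * (F q - F p0)"
      using aff q p0D by (simp add: inner_diff_right algebra_simps)
    also have "\<dots> = F q - (F q - c) / 2" unfolding e_def using False q by (simp add: field_simps)
    also have "\<dots> > c" using q by (simp add: field_simps)
    finally show ?thesis using that p by blast
  qed
qed

lemma cell_sublevel_retraction:
  fixes \<C> :: "'a::euclidean_space set set"
  assumes pc: "polyhedral_complex \<C>" and ca: "cellwise_affine \<C> F"
    and tt: "transversal_thresholds \<C> F a c" and "a \<le> c" and D: "D \<in> \<C>"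
  obtains r where
    "retraction {x \<in> D. F x \<le> c} {x \<in> D. F x \<le> c \<and> (F x \<le> a \<or> x \<in> poly_boundary D)} r"
    "\<And>x. x \<in> {x \<in> D. F x \<le> c} \<Longrightarrow> closed_segment x (r x) \<subseteq> {x \<in> D. F x \<le> c}"
proof (cases "\<exists>q\<in>D. c < F q")
  case True
  then obtain q where q: "q \<in> D" "c < F q" by blast
  obtain u d where aff: "\<forall>x\<in>D. F x = u \<bullet> x + d"
    using ca D unfolding cellwise_affine_def by blast
  have "polyhedron D" using pc D unfolding polyhedral_complex_def by blast
  then obtain H :: "'a set set" and \<alpha> \<beta> where rep: "inequality_polyhedron D H \<alpha> \<beta>"
    using polyhedron_inequality_representation by blast
  obtain p where "p \<in> rel_interior D" "c < F p"
    using rel_interior_point_above[OF polyhedron_imp_convex[OF \<open>polyhedron D\<close>], of F u d q c] aff q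
    by blast
  with rep aff \<open>a \<le> c\<close> interpret sublevel_cell D H \<alpha> \<beta> p F u d a c
    by (simp add: sublevel_cell_def sublevel_cell_axioms_def centred_polyhedron_def
        centred_polyhedron_axioms_def)
  show ?thesis using that retraction_onto_lower_part closed_segment_retract by blast
next
  case False
  then have "\<forall>x\<in>D. F x \<le> a"
    using transversal_cell_below_lower_threshold[OF pc ca tt D] by (simp add: not_less)
  then have "{x \<in> D. F x \<le> c \<and> (F x \<le> a \<or> x \<in> poly_boundary D)} = {x \<in> D. F x \<le> c}"
    using \<open>a \<le> c\<close> by force
  then show ?thesis
    using that[of id] by (simp add: retraction_def)
qed

definition mixed_sublevel ::
    "'a::euclidean_space set set \<Rightarrow> ('a \<Rightarrow> real) \<Rightarrow> real \<Rightarrow> real \<Rightarrow> 'a set set \<Rightarrow> 'a set" where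
  "mixed_sublevel \<C> F a c K = {x \<in> \<Union>\<C>. F x \<le> a} \<union> (\<Union>E\<in>K. {x \<in> E. F x \<le> c})"

lemma closed_cell_sublevel:
  assumes "polyhedral_complex \<C>" "cellwise_affine \<C> F" "E \<in> \<C>"
  shows "closed {x \<in> E. F x \<le> t}"
proof -
  obtain u d where aff: "\<forall>y\<in>E. F y = u \<bullet> y + d"
    using assms(2,3) unfolding cellwise_affine_def by blast
  have "{x \<in> E. F x \<le> t} = E \<inter> {x. u \<bullet> x \<le> t - d}" using aff by auto
  moreover have "closed E"
    using assms(1,3) polyhedron_imp_closed unfolding polyhedral_complex_def by blast
  ultimately show ?thesis by (simp add: closed_Int closed_halfspace_le)
qed

lemma closed_mixed_sublevel:
  assumes pc: "polyhedral_complex \<C>" and ca: "cellwise_affine \<C> F" and "K \<subseteq> \<C>"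
  shows "closed (mixed_sublevel \<C> F a c K)"
proof -
  have fin: "finite \<C>" "finite K"
    using pc assms(3) finite_subset unfolding polyhedral_complex_def by auto
  have "{x \<in> \<Union>\<C>. F x \<le> a} = (\<Union>E\<in>\<C>. {x \<in> E. F x \<le> a})" by auto
  then show ?thesis
    unfolding mixed_sublevel_def using fin assms(3) closed_cell_sublevel[OF pc ca]
    by (auto intro!: closed_Un closed_UN)
qed

lemma mixed_sublevel_remove_maximal_cell:
  fixes \<C> :: "'a::euclidean_space set set"
  assumes pc: "polyhedral_complex \<C>" and ca: "cellwise_affine \<C> F"
    and tt: "transversal_thresholds \<C> F a c" and "a \<le> c"
    and K: "K \<subseteq> \<C>" "\<forall>E\<in>K. \<forall>T. poly_face T E \<longrightarrow> T \<in> K"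
    and D: "D \<in> K" and D_max: "\<forall>E\<in>K. D \<subseteq> E \<longrightarrow> E = D"
  shows "mixed_sublevel \<C> F a c K homotopy_eqv mixed_sublevel \<C> F a c (K - {D})"
proof -
  define A where "A = {x \<in> D. F x \<le> c}"
  define Y where "Y = mixed_sublevel \<C> F a c (K - {D})"
  have "D \<in> \<C>" using D K by blast
  obtain r where ret: "retraction A {x \<in> A. F x \<le> a \<or> x \<in> poly_boundary D} r"
    and seg: "\<And>x. x \<in> A \<Longrightarrow> closed_segment x (r x) \<subseteq> A"
    using cell_sublevel_retraction[OF pc ca tt \<open>a \<le> c\<close> \<open>D \<in> \<C>\<close>] unfolding A_def by auto
  \<comment> \<open>the other cells of K meet D in proper faces, and the proper faces of D lie in K\<close>
  have "A \<inter> Y = {x \<in> A. F x \<le> a \<or> x \<in> poly_boundary D}"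
  proof (intro equalityI subsetI)
    fix x assume "x \<in> A \<inter> Y"
    then consider "x \<in> A" "F x \<le> a" | E where "x \<in> A" "E \<in> K" "E \<noteq> D" "x \<in> E"
      unfolding Y_def mixed_sublevel_def by blast
    then show "x \<in> {x \<in> A. F x \<le> a \<or> x \<in> poly_boundary D}"
    proof cases
      case 2
      have "poly_face (D \<inter> E) D"
        using pc K D 2 unfolding polyhedral_complex_def by blast
      moreover have "D \<inter> E \<noteq> D" using D_max 2 by blast
      moreover have "x \<in> D \<inter> E" using 2 unfolding A_def by blast
      ultimately show ?thesis using 2 unfolding poly_boundary_def by blast
    qed simp
  next
    fix x assume x: "x \<in> {x \<in> A. F x \<le> a \<or> x \<in> poly_boundary D}"
    have "x \<in> Y" if boundary: "x \<in> poly_boundary D"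
    proof -
      obtain T where "poly_face T D" "T \<noteq> D" "x \<in> T"
        using boundary unfolding poly_boundary_def by blast
      then show ?thesis using K D x unfolding Y_def mixed_sublevel_def A_def by blast
    qed
    then show "x \<in> A \<inter> Y"
      using x \<open>D \<in> \<C>\<close> unfolding Y_def mixed_sublevel_def A_def by blast
  qed
  moreover have "closed A"
    unfolding A_def using closed_cell_sublevel[OF pc ca \<open>D \<in> \<C>\<close>] .
  moreover have "closed Y"
    unfolding Y_def using closed_mixed_sublevel[OF pc ca, of "K - {D}"] K by blast
  ultimately have "(A \<union> Y) homotopy_eqv Y"
    using homotopy_eqv_glue_retraction ret seg by metis
  moreover have "mixed_sublevel \<C> F a c K = A \<union> Y"
    using D unfolding A_def Y_def mixed_sublevel_def by blast
  ultimately show ?thesis unfolding Y_def by simp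
qed

lemma mixed_sublevel_homotopy_eqv_empty:
  fixes \<C> :: "'a::euclidean_space set set"
  assumes pc: "polyhedral_complex \<C>" and ca: "cellwise_affine \<C> F"
    and tt: "transversal_thresholds \<C> F a c" and "a \<le> c"
    and "K \<subseteq> \<C>" "\<forall>E\<in>K. \<forall>T. poly_face T E \<longrightarrow> T \<in> K"
  shows "mixed_sublevel \<C> F a c K homotopy_eqv mixed_sublevel \<C> F a c {}"
  using assms(5,6)
proof (induction "card K" arbitrary: K rule: less_induct)
  case less
  show ?case
  proof (cases "K = {}")
    case True
    then show ?thesis by (simp add: homotopy_equivalent_space_refl)
  next
    case False
    have "finite K"
      using less.prems pc finite_subset unfolding polyhedral_complex_def by blast
    then obtain D where D: "D \<in> K" and D_max: "\<forall>E\<in>K. D \<subseteq> E \<longrightarrow> E = D"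
      using finite_has_maximal False by metis
    have "\<forall>E\<in>K - {D}. \<forall>T. poly_face T E \<longrightarrow> T \<in> K - {D}"
      using less.prems(2) D_max poly_face_subset by blast
    moreover have "card (K - {D}) < card K" using \<open>finite K\<close> D by (rule card_Diff1_less)
    ultimately have "mixed_sublevel \<C> F a c (K - {D}) homotopy_eqv mixed_sublevel \<C> F a c {}"
      using less.hyps less.prems(1) by blast
    moreover have "mixed_sublevel \<C> F a c K homotopy_eqv mixed_sublevel \<C> F a c (K - {D})"
      using mixed_sublevel_remove_maximal_cell[OF pc ca tt \<open>a \<le> c\<close> less.prems D D_max] .
    ultimately show ?thesis using homotopy_eqv_trans by blast
  qed
qed

lemma sublevel_homotopy_eqv_lower_threshold:
  fixes \<C> :: "'a::euclidean_space set set"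
  assumes pc: "polyhedral_complex \<C>" and ca: "cellwise_affine \<C> F"
    and tt: "transversal_thresholds \<C> F a c" and "a \<le> c"
  shows "{x \<in> \<Union>\<C>. F x \<le> c} homotopy_eqv {x \<in> \<Union>\<C>. F x \<le> a}"
proof -
  have "mixed_sublevel \<C> F a c \<C> homotopy_eqv mixed_sublevel \<C> F a c {}"
    using pc by (intro mixed_sublevel_homotopy_eqv_empty[OF pc ca tt \<open>a \<le> c\<close>])
      (auto simp: polyhedral_complex_def)
  moreover have "mixed_sublevel \<C> F a c \<C> = {x \<in> \<Union>\<C>. F x \<le> c}"
    using \<open>a \<le> c\<close> unfolding mixed_sublevel_def by auto
  moreover have "mixed_sublevel \<C> F a c {} = {x \<in> \<Union>\<C>. F x \<le> a}"
    unfolding mixed_sublevel_def by simp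
  ultimately show ?thesis by simp
qed

lemma transversal_thresholds_subinterval:
  assumes "transversal_thresholds \<C> F a b" "a \<le> a'" "b' \<le> b"
  shows "transversal_thresholds \<C> F a' b'"
proof -
  have "{a'..b'} \<subseteq> {a..b}" using assms(2,3) by auto
  then show ?thesis using assms(1) unfolding transversal_thresholds_def by (meson subset_trans)
qed

lemma transversal_thresholds_uminus:
  "transversal_thresholds \<C> (\<lambda>x. - F x) (- b) (- a) \<longleftrightarrow> transversal_thresholds \<C> F a b"
proof -
  have "flat_cell (\<lambda>x. - F x) E \<longleftrightarrow> flat_cell F E" for E :: "'a set"
    unfolding flat_cell_def by (metis minus_equation_iff)
  moreover have "(\<lambda>x. - F x) ` E \<subseteq> {- b..- a} \<longleftrightarrow> F ` E \<subseteq> {a..b}" for E :: "'a set"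
    by auto
  ultimately show ?thesis unfolding transversal_thresholds_def by simp
qed

lemma cellwise_affine_uminus: "cellwise_affine \<C> F \<Longrightarrow> cellwise_affine \<C> (\<lambda>x. - F x)"
  unfolding cellwise_affine_def by (metis minus_add_distrib inner_minus_left)

theorem theorem1p4:
  fixes \<C> :: "'a::euclidean_space set set" and F :: "'a \<Rightarrow> real" and a b c :: real
  assumes "polyhedral_complex \<C>"
    and "cellwise_affine \<C> F"
    and "transversal_thresholds \<C> F a b"
    and "c \<in> {a..b}"
  shows "{x \<in> \<Union>\<C>. F x \<le> c} homotopy_eqv {x \<in> \<Union>\<C>. F x \<le> a}
       \<and> {x \<in> \<Union>\<C>. F x \<ge> c} homotopy_eqv {x \<in> \<Union>\<C>. F x \<ge> b}"
proof
  have "a \<le> c" "c \<le> b" using assms(4) by auto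
  have "transversal_thresholds \<C> F a c"
    using transversal_thresholds_subinterval[OF assms(3) order_refl \<open>c \<le> b\<close>] .
  then show "{x \<in> \<Union>\<C>. F x \<le> c} homotopy_eqv {x \<in> \<Union>\<C>. F x \<le> a}"
    using sublevel_homotopy_eqv_lower_threshold[OF assms(1,2)] \<open>a \<le> c\<close> by blast
  have "transversal_thresholds \<C> (\<lambda>x. - F x) (- b) (- c)"
    using transversal_thresholds_subinterval[OF assms(3) \<open>a \<le> c\<close> order_refl]
    by (simp only: transversal_thresholds_uminus)
  then have "{x \<in> \<Union>\<C>. - F x \<le> - c} homotopy_eqv {x \<in> \<Union>\<C>. - F x \<le> - b}"
    using \<open>c \<le> b\<close>
    by (intro sublevel_homotopy_eqv_lower_threshold[OF assms(1) cellwise_affine_uminus[OF assms(2)]])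
      simp_all
  then show "{x \<in> \<Union>\<C>. F x \<ge> c} homotopy_eqv {x \<in> \<Union>\<C>. F x \<ge> b}" by simp
qed

end
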